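(* Let $\mathbb{K}$ be a field of characteristic $0$, $\mathcal{S}=\mathbb{K}[x_0,\dots,x_n]$, $R=\mathbb{K}[x_1,\dots,x_n]$, $k\le d$, $\omega\in\mathcal{S}_k$ and $\ell=x_0+\xi_1x_1+\dots+\xi_nx_n$ with $\xi\in\mathbb{K}^n$ and $\ell\nmid\omega$. Let $I_\xi:=\{p\in R:p\star(\omega^{d,\ell,\mathbf x}(\mathbf z)\,e_\xi(\mathbf z))=0\}$ and $\mathcal{A}_\xi:=R/I_\xi$. Then $\mathcal{N}(\mathcal{A}_\xi)-1=k=\deg(\omega)$.
   Context: $R^*$ is identified with $\mathbb{K}[[z_1,\dots,z_n]]$ via $\sum_\alpha\varphi_\alpha\mathbf z^\alpha/\alpha!\leftrightarrow(\mathbf x^\alpha\mapsto\varphi_\alpha)$; for $p\in R$, $p\star\varphi$ is the functional $q\mapsto\varphi(pq)$; $e_\xi(\mathbf z)=\exp(\sum_i\xi_iz_i)$. Writing $\omega=\sum_{j=0}^k\omega_j\ell^{k-j}$ with $\omega_j\in\mathbb{K}[x_1,\dots,x_n]_j$, set $\omega^{d,\ell,\mathbf x}:=\frac1{d!}\sum_{j=0}^k(d-j)!\,\omega_j$, read in the variables $z_1,\dots,z_n$. $I_\xi$ is an ideal contained in $\mathfrak m_\xi=(x_1-\xi_1,\dots,x_n-\xi_n)$, so $a(\xi)$ is well defined for $a\in\mathcal{A}_\xi$. The nil-index $\mathcal{N}(\mathcal{A}_\xi)$ is the minimal $N\in\mathbb{N}$ such that $(a-a(\xi))^N=0$ in $\mathcal{A}_\xi$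 for every $a\in\mathcal{A}_\xi$. *)

theory Defs
  imports Main "HOL-Library.Poly_Mapping"
begin

text \<open>Variable x_0 is index 0; R = K[x_1..x_n] are those polynomials whose
  monomials only involve indices 1..n.\<close>

type_synonym 'a mpoly = "(nat \<Rightarrow>\<^sub>0 nat) \<Rightarrow>\<^sub>0 'a"

definition Var :: "nat \<Rightarrow> 'a::comm_ring_1 mpoly" where
  "Var i = Poly_Mapping.single (Poly_Mapping.single i 1) 1"

definition Const :: "'a::comm_ring_1 \<Rightarrow> 'a mpoly" where
  "Const c = Poly_Mapping.single 0 c"

definition mdeg :: "(nat \<Rightarrow>\<^sub>0 nat) \<Rightarrow> nat" where
  "mdeg \<alpha> = (\<Sum>i\<in>Poly_Mapping.keys \<alpha>. Poly_Mapping.lookup \<alpha> i)"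

definition in_R :: "nat \<Rightarrow> 'a::comm_ring_1 mpoly \<Rightarrow> bool" where
  "in_R n p \<longleftrightarrow> (\<forall>\<alpha>\<in>Poly_Mapping.keys p. Poly_Mapping.keys \<alpha> \<subseteq> {1..n})"

definition in_S :: "nat \<Rightarrow> 'a::comm_ring_1 mpoly \<Rightarrow> bool" where
  "in_S n p \<longleftrightarrow> (\<forall>\<alpha>\<in>Poly_Mapping.keys p. Poly_Mapping.keys \<alpha> \<subseteq> {0..n})"

text \<open>p is homogeneous of degree j (the zero polynomial counts as homogeneous of every degree)\<close>
definition homogeneous :: "nat \<Rightarrow> 'a::comm_ring_1 mpoly \<Rightarrow> bool" where
  "homogeneous j p \<longleftrightarrow> (\<forall>\<alpha>\<in>Poly_Mapping.keys p. mdeg \<alpha> = j)"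

definition mpow :: "(nat \<Rightarrow> 'a::comm_ring_1) \<Rightarrow> (nat \<Rightarrow>\<^sub>0 nat) \<Rightarrow> 'a" where
  "mpow \<xi> \<alpha> = (\<Prod>i\<in>Poly_Mapping.keys \<alpha>. \<xi> i ^ Poly_Mapping.lookup \<alpha> i)"

definition mfact :: "(nat \<Rightarrow>\<^sub>0 nat) \<Rightarrow> nat" where
  "mfact \<alpha> = (\<Prod>i\<in>Poly_Mapping.keys \<alpha>. fact (Poly_Mapping.lookup \<alpha> i))"

definition eval :: "'a::comm_ring_1 mpoly \<Rightarrow> (nat \<Rightarrow> 'a) \<Rightarrow> 'a" where
  "eval p \<xi> = (\<Sum>\<alpha>\<in>Poly_Mapping.keys p. Poly_Mapping.lookup p \<alpha> * mpow \<xi> \<alpha>)"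

text \<open>Formal power series in z_1..z_n: coefficient function alpha |-> [z^alpha] F.\<close>
type_synonym 'a fser = "(nat \<Rightarrow>\<^sub>0 nat) \<Rightarrow> 'a"

definition mle :: "(nat \<Rightarrow>\<^sub>0 nat) \<Rightarrow> (nat \<Rightarrow>\<^sub>0 nat) \<Rightarrow> bool" where
  "mle \<beta> \<alpha> \<longleftrightarrow> (\<forall>i. Poly_Mapping.lookup \<beta> i \<le> Poly_Mapping.lookup \<alpha> i)"

definition ser_mult :: "'a::comm_ring_1 fser \<Rightarrow> 'a fser \<Rightarrow> 'a fser" where
  "ser_mult F G = (\<lambda>\<alpha>. \<Sum>\<beta>\<in>{\<beta>. mle \<beta> \<alpha>}. F \<beta> * G (\<alpha> - \<beta>))"

text \<open>a polynomial in x_1..x_n read in the variables z_1..z_n\<close>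
definition ser_of_poly :: "'a::comm_ring_1 mpoly \<Rightarrow> 'a fser" where
  "ser_of_poly q = (\<lambda>\<alpha>. Poly_Mapping.lookup q \<alpha>)"

text \<open>e_xi(z) = exp(sum_i xi_i z_i) = sum_alpha xi^alpha z^alpha / alpha!\<close>
definition exp_ser :: "nat \<Rightarrow> (nat \<Rightarrow> 'a::field_char_0) \<Rightarrow> 'a fser" where
  "exp_ser n \<xi> = (\<lambda>\<alpha>. if Poly_Mapping.keys \<alpha> \<subseteq> {1..n} then mpow \<xi> \<alpha> / of_nat (mfact \<alpha>) else 0)"

text \<open>Identification R* = K[[z]]: sum_alpha phi_alpha z^alpha/alpha! corresponds to the
  functional x^alpha |-> phi_alpha. A functional is represented by its values on monomials.\<close>
definition functional_of_ser :: "'a::field_char_0 fser \<Rightarrow> ((nat \<Rightarrow>\<^sub>0 nat) \<Rightarrow> 'a)" where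
  "functional_of_ser F = (\<lambda>\<alpha>. of_nat (mfact \<alpha>) * F \<alpha>)"

definition dual_app :: "((nat \<Rightarrow>\<^sub>0 nat) \<Rightarrow> 'a::comm_ring_1) \<Rightarrow> 'a mpoly \<Rightarrow> 'a" where
  "dual_app \<phi> q = (\<Sum>\<alpha>\<in>Poly_Mapping.keys q. Poly_Mapping.lookup q \<alpha> * \<phi> \<alpha>)"

definition star :: "nat \<Rightarrow> 'a::comm_ring_1 mpoly \<Rightarrow> ((nat \<Rightarrow>\<^sub>0 nat) \<Rightarrow> 'a) \<Rightarrow> ((nat \<Rightarrow>\<^sub>0 nat) \<Rightarrow> 'a)" where
  "star n p \<phi> = (\<lambda>\<beta>. if Poly_Mapping.keys \<beta> \<subseteq> {1..n} then dual_app \<phi> (p * Poly_Mapping.single \<beta> 1) else 0)"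

definition omega_dlx :: "nat \<Rightarrow> nat \<Rightarrow> (nat \<Rightarrow> 'a::field_char_0 mpoly) \<Rightarrow> 'a mpoly" where
  "omega_dlx d k om = (\<Sum>j\<le>k. Const (fact (d - j) / fact d) * om j)"

definition I_xi :: "nat \<Rightarrow> nat \<Rightarrow> nat \<Rightarrow> (nat \<Rightarrow> 'a::field_char_0 mpoly) \<Rightarrow> (nat \<Rightarrow> 'a) \<Rightarrow> 'a mpoly set" where
  "I_xi n d k om \<xi> = {p. in_R n p \<and>
     star n p (functional_of_ser (ser_mult (ser_of_poly (omega_dlx d k om)) (exp_ser n \<xi>))) = (\<lambda>_. 0)}"

text \<open>Nil-index of A = R/I, written out in R: (a - a(xi))^N = 0 in R/I means
  (p - p(xi))^N \<in> I for a representative p \<in> R.\<close>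
definition nil_prop :: "nat \<Rightarrow> 'a::comm_ring_1 mpoly set \<Rightarrow> (nat \<Rightarrow> 'a) \<Rightarrow> nat \<Rightarrow> bool" where
  "nil_prop n I \<xi> N \<longleftrightarrow> (\<forall>p. in_R n p \<longrightarrow> (p - Const (eval p \<xi>)) ^ N \<in> I)"

definition is_nil_index :: "nat \<Rightarrow> 'a::comm_ring_1 mpoly set \<Rightarrow> (nat \<Rightarrow> 'a) \<Rightarrow> nat \<Rightarrow> bool" where
  "is_nil_index n I \<xi> N \<longleftrightarrow> nil_prop n I \<xi> N \<and> (\<forall>M<N. \<not> nil_prop n I \<xi> M)"

end

theory Submission
  imports Defs "HOL-Computational_Algebra.Polynomial"
begin

text \<open>Write \<open>f = \<omega>\<^sup>d\<^sup>,\<^sup>\<ell>\<^sup>,\<^sup>x\<close> and \<open>\<phi>\<close> for the functional \<open>f(\<bold>z) e\<^sub>\<xi>(\<bold>z)\<close>. On \<open>R\<close> it acts as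
  \<open>\<phi>(q) = \<Sum>\<^sub>\<gamma> f\<^sub>\<gamma> (\<partial>\<^sup>\<gamma> q)(\<xi>)\<close>, and \<open>f\<close> has degree \<open>k\<close> with degree-\<open>k\<close> part \<open>(d-k)!/d! \<omega>\<^sub>k\<close>.
  So \<open>p \<in> I\<^sub>\<xi>\<close> as soon as every \<open>p r\<close> (\<open>r \<in> R\<close>) vanishes to order \<open>k+1\<close> at \<open>\<xi>\<close>, which is the
  case for \<open>p = (q - q(\<xi>))\<^sup>k\<^sup>+\<^sup>1\<close>. Conversely \<open>\<omega>\<^sub>k \<noteq> 0\<close> because \<open>\<ell>\<close> does not divide \<open>\<omega>\<close>, so
  \<open>\<omega>\<^sub>k(a) \<noteq> 0\<close> for some \<open>a\<close>; for the linear form \<open>L = \<Sum> a\<^sub>i x\<^sub>i\<close> one gets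
  \<open>\<phi>((L - L(\<xi>))\<^sup>k) = k! (d-k)!/d! \<omega>\<^sub>k(a) \<noteq> 0\<close>, hence \<open>(L - L(\<xi>))\<^sup>M \<notin> I\<^sub>\<xi>\<close> for \<open>M \<le> k\<close>.\<close>

abbreviation lookup where "lookup \<equiv> Poly_Mapping.lookup"
abbreviation keys where "keys \<equiv> Poly_Mapping.keys"
abbreviation single where "single \<equiv> Poly_Mapping.single"

definition lin_extend :: "('k \<Rightarrow> 'a::zero \<Rightarrow> 'b::comm_monoid_add) \<Rightarrow> ('k \<Rightarrow>\<^sub>0 'a) \<Rightarrow> 'b" where
  "lin_extend h p = (\<Sum>k\<in>keys p. h k (lookup p k))"

lemma lin_extend_superset:
  assumes "finite S" "keys p \<subseteq> S" "\<And>k. h k 0 = 0"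
  shows "lin_extend h p = (\<Sum>k\<in>S. h k (lookup p k))"
  unfolding lin_extend_def
  by (rule sum.mono_neutral_left) (use assms in \<open>auto simp: in_keys_iff\<close>)

lemma lin_extend_add:
  fixes h :: "'k \<Rightarrow> 'a::monoid_add \<Rightarrow> 'b::comm_monoid_add"
  assumes "\<And>k x y. h k (x + y) = h k x + h k y" "\<And>k. h k 0 = 0"
  shows "lin_extend h (p + q) = lin_extend h p + lin_extend h q"
proof -
  let ?S = "keys p \<union> keys q"
  have "lin_extend h (p + q) = (\<Sum>k\<in>?S. h k (lookup (p + q) k))"
    by (rule lin_extend_superset) (use assms keys_add[of p q] in auto)
  also have "\<dots> = (\<Sum>k\<in>?S. h k (lookup p k)) + (\<Sum>k\<in>?S. h k (lookup q k))"
    by (simp add: lookup_add assms sum.distrib)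
  also have "\<dots> = lin_extend h p + lin_extend h q"
    by (subst (1 2) lin_extend_superset[where S = ?S]) (use assms in auto)
  finally show ?thesis .
qed

lemma lin_extend_single:
  assumes "\<And>k. h k 0 = 0"
  shows "lin_extend h (single k c) = h k c"
  using assms by (cases "c = 0") (auto simp: lin_extend_def)

lemma poly_mapping_sum_single: "p = (\<Sum>k\<in>keys p. single k (lookup p k))"
proof (rule poly_mapping_eqI)
  fix x
  show "lookup p x = lookup (\<Sum>k\<in>keys p. single k (lookup p k)) x"
    by (cases "x \<in> keys p") (auto simp: lookup_sum lookup_single when_def in_keys_iff)
qed

lemma additive_sum:
  fixes F :: "'x::comm_monoid_add \<Rightarrow> 'b::ab_group_add"
  assumes "\<And>p q. F (p + q) = F p + F q"
  shows "F (\<Sum>i\<in>I. g i) = (\<Sum>i\<in>I. F (g i))"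
  using sum_comp_morphism[of F g I] assms[of 0 0] by (simp add: assms comp_def)

lemma additive_poly_mapping_eq_on:
  fixes F G :: "('k \<Rightarrow>\<^sub>0 'a::comm_monoid_add) \<Rightarrow> 'b::ab_group_add"
  assumes "\<And>p q. F (p + q) = F p + F q" "\<And>p q. G (p + q) = G p + G q"
    and "\<And>k c. P k \<Longrightarrow> F (single k c) = G (single k c)"
    and "\<forall>k\<in>keys p. P k"
  shows "F p = G p"
proof -
  have "F p = (\<Sum>k\<in>keys p. F (single k (lookup p k)))"
    by (subst poly_mapping_sum_single) (rule additive_sum, rule assms)
  also have "\<dots> = (\<Sum>k\<in>keys p. G (single k (lookup p k)))"
    using assms(3,4) by simp
  also have "\<dots> = G p"
    by (subst (2) poly_mapping_sum_single) (rule additive_sum[symmetric], rule assms)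
  finally show ?thesis .
qed

lemma additive_poly_mapping_eq:
  fixes F G :: "('k \<Rightarrow>\<^sub>0 'a::comm_monoid_add) \<Rightarrow> 'b::ab_group_add"
  assumes "\<And>p q. F (p + q) = F p + F q" "\<And>p q. G (p + q) = G p + G q"
    and "\<And>k c. F (single k c) = G (single k c)"
  shows "F p = G p"
  using additive_poly_mapping_eq_on[where P = "\<lambda>_. True"] assms by blast

lemma biadditive_poly_mapping_eq:
  fixes F G :: "('k \<Rightarrow>\<^sub>0 'a::comm_monoid_add) \<Rightarrow> ('k \<Rightarrow>\<^sub>0 'a) \<Rightarrow> 'b::ab_group_add"
  assumes "\<And>p q r. F (p + q) r = F p r + F q r" "\<And>p q r. G (p + q) r = G p r + G q r"
    and "\<And>p q r. F r (p + q) = F r p + F r q" "\<And>p q r. G r (p + q) = G r p + G r q"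
    and "\<And>k c l e. F (single k c) (single l e) = G (single k c) (single l e)"
  shows "F p q = G p q"
proof -
  have "F (single k c) q = G (single k c) q" for k c
    by (rule additive_poly_mapping_eq[where F = "F (single k c)"]) (use assms(3-5) in auto)
  then show ?thesis
    using additive_poly_mapping_eq[where F = "\<lambda>p. F p q" and G = "\<lambda>p. G p q"] assms(1,2)
    by blast
qed

lemma keys_diff_nat: "keys (\<alpha> - \<beta> :: nat \<Rightarrow>\<^sub>0 nat) \<subseteq> keys \<alpha>"
  by (auto simp: in_keys_iff lookup_minus)

lemma prod_keys_superset:
  assumes "finite S" "keys \<alpha> \<subseteq> S" "\<And>i. f i 0 = 1"
  shows "(\<Prod>i\<in>keys \<alpha>. f i (lookup \<alpha> i)) = (\<Prod>i\<in>S. f i (lookup \<alpha> i))"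
  by (rule prod.mono_neutral_left) (use assms in \<open>auto simp: in_keys_iff\<close>)

lemma mpow_superset: "finite S \<Longrightarrow> keys \<alpha> \<subseteq> S \<Longrightarrow> mpow \<xi> \<alpha> = (\<Prod>i\<in>S. \<xi> i ^ lookup \<alpha> i)"
  unfolding mpow_def by (rule prod_keys_superset) auto

lemma mfact_superset: "finite S \<Longrightarrow> keys \<alpha> \<subseteq> S \<Longrightarrow> mfact \<alpha> = (\<Prod>i\<in>S. fact (lookup \<alpha> i))"
  unfolding mfact_def by (rule prod_keys_superset) auto

lemma mdeg_superset: "finite S \<Longrightarrow> keys \<alpha> \<subseteq> S \<Longrightarrow> mdeg \<alpha> = (\<Sum>i\<in>S. lookup \<alpha> i)"
  unfolding mdeg_def by (rule sum.mono_neutral_left) (auto simp: in_keys_iff)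

lemma mpow_add: "mpow \<xi> (\<alpha> + \<beta>) = mpow \<xi> \<alpha> * mpow \<xi> \<beta>"
proof -
  let ?S = "keys \<alpha> \<union> keys \<beta>"
  have "mpow \<xi> (\<alpha> + \<beta>) = (\<Prod>i\<in>?S. \<xi> i ^ lookup \<alpha> i) * (\<Prod>i\<in>?S. \<xi> i ^ lookup \<beta> i)"
    by (subst mpow_superset[where S = ?S])
       (use keys_add[of \<alpha> \<beta>] in \<open>auto simp: lookup_add power_add prod.distrib\<close>)
  then show ?thesis
    by (subst (1 2) mpow_superset[where S = ?S]) auto
qed

lemma mpow_zero [simp]: "mpow \<xi> 0 = 1"
  by (simp add: mpow_def)

lemma mpow_single_one [simp]: "mpow \<xi> (single i (Suc 0)) = \<xi> i"
  by (simp add: mpow_def)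

lemma mdeg_add: "mdeg (\<alpha> + \<beta>) = mdeg \<alpha> + mdeg \<beta>"
proof -
  let ?S = "keys \<alpha> \<union> keys \<beta>"
  have "mdeg (\<alpha> + \<beta>) = (\<Sum>i\<in>?S. lookup \<alpha> i) + (\<Sum>i\<in>?S. lookup \<beta> i)"
    by (subst mdeg_superset[where S = ?S])
       (use keys_add[of \<alpha> \<beta>] in \<open>auto simp: lookup_add sum.distrib\<close>)
  then show ?thesis
    by (subst (1 2) mdeg_superset[where S = ?S]) auto
qed

lemma mdeg_zero [simp]: "mdeg 0 = 0"
  by (simp add: mdeg_def)

lemma mdeg_single_one [simp]: "mdeg (single i (Suc 0)) = 1"
  by (simp add: mdeg_def)

lemma mdeg_eq_0_iff: "mdeg \<alpha> = 0 \<longleftrightarrow> \<alpha> = 0"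
proof
  assume "mdeg \<alpha> = 0"
  then have "\<forall>i\<in>keys \<alpha>. lookup \<alpha> i = 0"
    unfolding mdeg_def by simp
  then show "\<alpha> = 0"
    by (metis keys_eq_empty all_not_in_conv lookup_not_eq_zero_eq_in_keys)
qed simp

lemma multi_index_induct [case_names zero add_unit]:
  fixes \<alpha> :: "nat \<Rightarrow>\<^sub>0 nat"
  assumes "P 0" "\<And>i \<beta>. P \<beta> \<Longrightarrow> P (single i (Suc 0) + \<beta>)"
  shows "P \<alpha>"
proof (induction "mdeg \<alpha>" arbitrary: \<alpha>)
  case 0
  then show ?case
    using assms(1) mdeg_eq_0_iff by metis
next
  case (Suc m)
  then obtain i where i: "i \<in> keys \<alpha>"
    by (metis mdeg_zero all_not_in_conv keys_eq_empty nat.distinct(1))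
  define \<beta> where "\<beta> = \<alpha> - single i (Suc 0)"
  have \<alpha>: "\<alpha> = single i (Suc 0) + \<beta>"
    unfolding \<beta>_def using i
    by (intro poly_mapping_eqI) (auto simp: lookup_add lookup_minus lookup_single when_def in_keys_iff)
  with Suc have "m = mdeg \<beta>"
    by (simp add: mdeg_add)
  with Suc \<alpha> show ?case
    using assms(2) by metis
qed

definition falling_fact :: "nat \<Rightarrow> nat \<Rightarrow> nat" where
  "falling_fact x c = (\<Prod>t<c. x - t)"

lemma falling_fact_0 [simp]: "falling_fact x 0 = 1"
  by (simp add: falling_fact_def)

lemma falling_fact_Suc: "falling_fact x (Suc c) = falling_fact x c * (x - c)"
  by (simp add: falling_fact_def)

lemma falling_fact_1 [simp]: "falling_fact x (Suc 0) = x"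
  by (simp add: falling_fact_def)

lemma falling_fact_add: "falling_fact x (b + a) = falling_fact x b * falling_fact (x - b) a"
  by (induction a) (auto simp: falling_fact_Suc diff_diff_add)

lemma falling_fact_mult_fact: "c \<le> x \<Longrightarrow> falling_fact x c * fact (x - c) = fact x"
proof (induction c)
  case (Suc c)
  then have "x - c = Suc (x - Suc c)"
    by simp
  then have "fact (x - c) = (x - c) * fact (x - Suc c)"
    by (simp add: fact_Suc)
  with Suc show ?case
    by (simp add: falling_fact_Suc)
qed simp

lemma falling_fact_self: "falling_fact x x = fact x"
  using falling_fact_mult_fact[of x x] by simp

lemma falling_fact_eq_0: "x < c \<Longrightarrow> falling_fact x c = 0"
  unfolding falling_fact_def by (rule prod_zero) auto

definition mfalling_fact :: "(nat \<Rightarrow>\<^sub>0 nat) \<Rightarrow> (nat \<Rightarrow>\<^sub>0 nat) \<Rightarrow> nat" where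
  "mfalling_fact \<alpha> \<gamma> = (\<Prod>i\<in>keys \<gamma>. falling_fact (lookup \<alpha> i) (lookup \<gamma> i))"

lemma mfalling_fact_superset:
  "finite S \<Longrightarrow> keys \<gamma> \<subseteq> S \<Longrightarrow> mfalling_fact \<alpha> \<gamma> = (\<Prod>i\<in>S. falling_fact (lookup \<alpha> i) (lookup \<gamma> i))"
  unfolding mfalling_fact_def by (rule prod_keys_superset) auto

lemma mfalling_fact_zero [simp]: "mfalling_fact \<alpha> 0 = 1"
  by (simp add: mfalling_fact_def)

lemma mfalling_fact_single_one [simp]: "mfalling_fact \<alpha> (single i (Suc 0)) = lookup \<alpha> i"
  by (simp add: mfalling_fact_def)

lemma mfalling_fact_add: "mfalling_fact \<alpha> (a + b) = mfalling_fact \<alpha> b * mfalling_fact (\<alpha> - b) a"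
proof -
  let ?S = "keys a \<union> keys b"
  have "\<And>i. falling_fact (lookup \<alpha> i) (lookup (a + b) i)
          = falling_fact (lookup \<alpha> i) (lookup b i) * falling_fact (lookup (\<alpha> - b) i) (lookup a i)"
    by (metis falling_fact_add add.commute lookup_add lookup_minus)
  then show ?thesis
    by (subst (1 2 3) mfalling_fact_superset[where S = ?S])
       (use keys_add[of a b] in \<open>auto simp: prod.distrib\<close>)
qed

lemma mle_imp_keys_subset: "mle \<beta> \<alpha> \<Longrightarrow> keys \<beta> \<subseteq> keys \<alpha>"
  unfolding mle_def by (auto simp: in_keys_iff) (metis order.strict_trans2)

lemma finite_mle: "finite {\<beta>. mle \<beta> (\<alpha>::nat \<Rightarrow>\<^sub>0 nat)}"
proof -
  let ?F = "{g. \<forall>x. (x \<in> keys \<alpha> \<longrightarrow> g x \<in> {..mdeg \<alpha>}) \<and> (x \<notin> keys \<alpha> \<longrightarrow> g x = (0::nat))}"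
  have in_F: "lookup \<beta> \<in> ?F" if "mle \<beta> \<alpha>" for \<beta>
  proof -
    have "lookup \<beta> x \<le> mdeg \<alpha>" if "x \<in> keys \<alpha>" for x
    proof -
      have "lookup \<alpha> x \<le> mdeg \<alpha>"
        unfolding mdeg_def using that by (intro member_le_sum) auto
      then show ?thesis
        using \<open>mle \<beta> \<alpha>\<close> by (metis mle_def order_trans)
    qed
    moreover have "lookup \<beta> x = 0" if "x \<notin> keys \<alpha>" for x
      using that \<open>mle \<beta> \<alpha>\<close> by (metis in_keys_iff le_zero_eq mle_def)
    ultimately show ?thesis
      by auto
  qed
  have "lookup ` {\<beta>. mle \<beta> \<alpha>} \<subseteq> ?F"
    by (rule image_subsetI) (use in_F in \<open>simp only: mem_Collect_eq\<close>)
  moreover have "finite ?F"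
    by (rule finite_set_of_finite_funs) auto
  moreover have "inj_on lookup {\<beta>. mle \<beta> \<alpha>}"
    by (rule inj_onI) (simp add: poly_mapping_eqI)
  ultimately show ?thesis
    using finite_subset finite_imageD by blast
qed

lemma mfalling_fact_eq_0_if_not_mle: "\<not> mle \<beta> \<alpha> \<Longrightarrow> mfalling_fact \<alpha> \<beta> = 0"
proof -
  assume "\<not> mle \<beta> \<alpha>"
  then obtain i where i: "lookup \<alpha> i < lookup \<beta> i"
    by (auto simp: mle_def not_le)
  then have "i \<in> keys \<beta>"
    by (simp add: in_keys_iff)
  with i show ?thesis
    unfolding mfalling_fact_def by (metis finite_keys prod_zero falling_fact_eq_0)
qed

lemma mfalling_fact_mult_mfact: "mle \<beta> \<alpha> \<Longrightarrow> mfalling_fact \<alpha> \<beta> * mfact (\<alpha> - \<beta>) = mfact \<alpha>"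
proof -
  assume le: "mle \<beta> \<alpha>"
  let ?S = "keys \<alpha>"
  have "mfalling_fact \<alpha> \<beta> * mfact (\<alpha> - \<beta>)
      = (\<Prod>i\<in>?S. falling_fact (lookup \<alpha> i) (lookup \<beta> i)) * (\<Prod>i\<in>?S. fact (lookup (\<alpha> - \<beta>) i))"
    using le keys_diff_nat mle_imp_keys_subset
    by (simp add: mfalling_fact_superset[where S = ?S] mfact_superset[where S = ?S])
  also have "\<dots> = (\<Prod>i\<in>?S. falling_fact (lookup \<alpha> i) (lookup \<beta> i) * fact (lookup \<alpha> i - lookup \<beta> i))"
    by (simp add: prod.distrib lookup_minus)
  also have "\<dots> = (\<Prod>i\<in>?S. fact (lookup \<alpha> i))"
    using le by (intro prod.cong refl) (simp add: mle_def falling_fact_mult_fact)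
  finally show ?thesis
    by (simp add: mfact_def)
qed

lemma Const_mult_single: "Const c * single \<alpha> e = single \<alpha> (c * e)"
  by (simp add: Const_def mult_single)

lemma Const_mult_Const: "Const c * Const e = Const (c * e)"
  by (simp add: Const_def mult_single)

lemma Const_0 [simp]: "Const 0 = 0"
  by (simp add: Const_def)

lemma Const_1 [simp]: "Const 1 = 1"
  by (simp add: Const_def)

lemma of_nat_eq_Const: "(of_nat m :: 'a::comm_ring_1 mpoly) = Const (of_nat m)"
  by (simp add: Const_def)

lemma lookup_Const_mult: "lookup (Const c * p) \<alpha> = c * lookup p \<alpha>"
  by (simp add: Const_def mult_map_scale_conv_mult[symmetric] Poly_Mapping.map.rep_eq when_def)

lemma eval_eq_lin_extend: "eval p \<xi> = lin_extend (\<lambda>\<alpha> c. c * mpow \<xi> \<alpha>) p"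
  by (simp add: eval_def lin_extend_def)

lemma eval_add: "eval (p + q) \<xi> = eval p \<xi> + eval q \<xi>"
  unfolding eval_eq_lin_extend by (rule lin_extend_add) (auto simp: distrib_right)

lemma eval_single: "eval (single \<alpha> c) \<xi> = c * mpow \<xi> \<alpha>"
  unfolding eval_eq_lin_extend by (subst lin_extend_single) auto

lemma eval_mult: "eval (p * q) \<xi> = eval p \<xi> * eval q \<xi>"
  by (rule biadditive_poly_mapping_eq[where F = "\<lambda>p q. eval (p * q) \<xi>"])
     (auto simp: eval_add distrib_left distrib_right mult_single eval_single mpow_add)

lemma eval_diff: "eval (p - q) \<xi> = eval p \<xi> - eval q \<xi>"
  using eval_add[of "p - q" q \<xi>] by simp

lemma eval_Const [simp]: "eval (Const c) \<xi> = c"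
  by (simp add: Const_def eval_single)

lemma eval_1 [simp]: "eval 1 \<xi> = 1"
  using eval_Const[of 1 \<xi>] by simp

lemma eval_power: "eval (p ^ m) \<xi> = eval p \<xi> ^ m"
  by (induction m) (auto simp: eval_mult)

lemma eval_cong_in_R:
  assumes "in_R n p" "\<And>i. i \<in> {1..n} \<Longrightarrow> a i = b i"
  shows "eval p a = eval p b"
proof -
  have "mpow a \<alpha> = mpow b \<alpha>" if "\<alpha> \<in> keys p" for \<alpha>
  proof -
    have "keys \<alpha> \<subseteq> {1..n}"
      using assms(1) that by (simp add: in_R_def)
    then show ?thesis
      unfolding mpow_def using assms(2) by (intro prod.cong refl) (simp add: subset_iff)
  qed
  then show ?thesis
    by (simp add: eval_def)
qed

lemma dual_app_eq_lin_extend: "dual_app \<phi> q = lin_extend (\<lambda>\<alpha> c. c * \<phi> \<alpha>) q"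
  by (simp add: dual_app_def lin_extend_def)

lemma dual_app_add: "dual_app \<phi> (p + q) = dual_app \<phi> p + dual_app \<phi> q"
  unfolding dual_app_eq_lin_extend by (rule lin_extend_add) (auto simp: distrib_right)

lemma dual_app_single: "dual_app \<phi> (single \<alpha> c) = c * \<phi> \<alpha>"
  unfolding dual_app_eq_lin_extend by (subst lin_extend_single) auto

lemma dual_app_Const_mult: "dual_app \<phi> (Const c * p) = c * dual_app \<phi> p"
  by (rule additive_poly_mapping_eq[where F = "\<lambda>p. dual_app \<phi> (Const c * p)"])
     (auto simp: distrib_left dual_app_add Const_mult_single dual_app_single)

lemma in_R_add: "in_R n p \<Longrightarrow> in_R n q \<Longrightarrow> in_R n (p + q)"
  unfolding in_R_def using keys_add[of p q] by blast

lemma in_R_diff: "in_R n p \<Longrightarrow> in_R n q \<Longrightarrow> in_R n (p - q)"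
  unfolding in_R_def using keys_diff[of p q] by blast

lemma in_R_mult: "in_R n p \<Longrightarrow> in_R n q \<Longrightarrow> in_R n (p * q)"
  unfolding in_R_def
proof
  fix \<gamma>
  assume "\<forall>\<alpha>\<in>keys p. keys \<alpha> \<subseteq> {1..n}" "\<forall>\<alpha>\<in>keys q. keys \<alpha> \<subseteq> {1..n}" "\<gamma> \<in> keys (p * q)"
  moreover obtain \<alpha> \<beta> where "\<gamma> = \<alpha> + \<beta>" "\<alpha> \<in> keys p" "\<beta> \<in> keys q"
    using keys_mult[of p q] \<open>\<gamma> \<in> keys (p * q)\<close> by blast
  ultimately show "keys \<gamma> \<subseteq> {1..n}"
    using keys_add[of \<alpha> \<beta>] by blast
qed

lemma in_R_single: "keys \<beta> \<subseteq> {1..n} \<Longrightarrow> in_R n (single \<beta> c)"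
  by (auto simp: in_R_def)

lemma in_R_Const: "in_R n (Const c)"
  by (simp add: Const_def in_R_single)

lemma in_R_Var: "i \<in> {1..n} \<Longrightarrow> in_R n (Var i)"
  by (simp add: Var_def in_R_single)

lemma in_R_power: "in_R n p \<Longrightarrow> in_R n (p ^ m)"
  by (induction m) (auto intro: in_R_mult in_R_Const[of n 1, simplified])

lemma in_R_sum: "(\<And>i. i \<in> I \<Longrightarrow> in_R n (g i)) \<Longrightarrow> in_R n (\<Sum>i\<in>I. g i)"
  by (induction I rule: infinite_finite_induct) (auto simp: in_R_add in_R_Const[of n 0, simplified])

section \<open>Partial derivatives\<close>

text \<open>\<open>mpderiv \<gamma>\<close> is the differential operator \<open>\<partial>\<^sup>\<gamma>\<close>, mapping \<open>x\<^sup>\<alpha>\<close> to \<open>\<alpha>!/(\<alpha>-\<gamma>)! x\<^sup>\<alpha>\<^sup>-\<^sup>\<gamma>\<close>;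
  the falling factorial vanishes unless \<open>\<gamma> \<le> \<alpha>\<close>, so the truncated subtraction is harmless.\<close>

definition mpderiv :: "(nat \<Rightarrow>\<^sub>0 nat) \<Rightarrow> 'a::comm_ring_1 mpoly \<Rightarrow> 'a mpoly" where
  "mpderiv \<gamma> p = lin_extend (\<lambda>\<alpha> c. single (\<alpha> - \<gamma>) (c * of_nat (mfalling_fact \<alpha> \<gamma>))) p"

lemma mpderiv_add: "mpderiv \<gamma> (p + q) = mpderiv \<gamma> p + mpderiv \<gamma> q"
  unfolding mpderiv_def by (rule lin_extend_add) (auto simp: distrib_right single_add)

lemma mpderiv_single: "mpderiv \<gamma> (single \<alpha> c) = single (\<alpha> - \<gamma>) (c * of_nat (mfalling_fact \<alpha> \<gamma>))"
  unfolding mpderiv_def by (subst lin_extend_single) auto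

lemma mpderiv_diff: "mpderiv \<gamma> (p - q) = mpderiv \<gamma> p - mpderiv \<gamma> q"
  using mpderiv_add[of \<gamma> "p - q" q] by simp

lemma mpderiv_sum: "mpderiv \<gamma> (\<Sum>i\<in>I. g i) = (\<Sum>i\<in>I. mpderiv \<gamma> (g i))"
  by (rule additive_sum) (rule mpderiv_add)

lemma mpderiv_0 [simp]: "mpderiv 0 p = p"
  by (rule additive_poly_mapping_eq[where F = "mpderiv 0"]) (auto simp: mpderiv_add mpderiv_single)

lemma mpderiv_mpderiv: "mpderiv a (mpderiv b p) = mpderiv (a + b) p"
proof (rule additive_poly_mapping_eq[where F = "\<lambda>p. mpderiv a (mpderiv b p)"])
  fix k :: "nat \<Rightarrow>\<^sub>0 nat" and c :: 'a
  have "k - b - a = k - (a + b)"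
    by (rule poly_mapping_eqI) (simp add: lookup_minus lookup_add)
  then show "mpderiv a (mpderiv b (single k c)) = mpderiv (a + b) (single k c)"
    by (simp add: mpderiv_single mfalling_fact_add mult.assoc)
qed (auto simp: mpderiv_add)

lemma diff_single_add_comm:
  "lookup k i \<noteq> 0 \<Longrightarrow> k - single i (Suc 0) + l = k + l - single i (Suc 0 :: nat)"
  by (rule poly_mapping_eqI) (auto simp: lookup_minus lookup_add lookup_single when_def)

lemma mpderiv_mult:
  "mpderiv (single i (Suc 0)) (p * q) = mpderiv (single i (Suc 0)) p * q + p * mpderiv (single i (Suc 0)) q"
proof (rule biadditive_poly_mapping_eq[where F = "\<lambda>p q. mpderiv (single i (Suc 0)) (p * q)"])
  fix k l :: "nat \<Rightarrow>\<^sub>0 nat" and c e :: 'a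
  let ?e = "single i (Suc 0)"
  have shift_left: "single (k - ?e + l) (c * of_nat (lookup k i) * e)
      = single (k + l - ?e) (c * of_nat (lookup k i) * e)"
    by (cases "lookup k i = 0") (simp_all add: diff_single_add_comm)
  have shift_right: "single (k + (l - ?e)) (c * (e * of_nat (lookup l i)))
      = single (k + l - ?e) (c * (e * of_nat (lookup l i)))"
    using diff_single_add_comm[of l i k] by (cases "lookup l i = 0") (simp_all add: add.commute)
  have "mpderiv ?e (single k c * single l e)
      = single (k + l - ?e) (c * e * of_nat (lookup k i) + c * e * of_nat (lookup l i))"
    by (simp add: mult_single mpderiv_single lookup_add distrib_left)
  also have "\<dots> = single (k - ?e + l) (c * of_nat (lookup k i) * e)
                  + single (k + (l - ?e)) (c * (e * of_nat (lookup l i)))"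
    unfolding shift_left shift_right single_add by (simp add: mult_ac)
  also have "\<dots> = mpderiv ?e (single k c) * single l e + single k c * mpderiv ?e (single l e)"
    by (simp add: mult_single mpderiv_single)
  finally show "mpderiv ?e (single k c * single l e)
      = mpderiv ?e (single k c) * single l e + single k c * mpderiv ?e (single l e)" .
qed (auto simp: mpderiv_add distrib_left distrib_right)

lemma mpderiv_Const: "mpderiv (single i (Suc 0)) (Const c) = 0"
  by (simp add: Const_def mpderiv_single)

lemma mpderiv_Var: "mpderiv (single i (Suc 0)) (Var j) = (if i = j then 1 else 0)"
  by (auto simp: Var_def mpderiv_single lookup_single)

lemma mpderiv_Const_mult: "mpderiv (single i (Suc 0)) (Const c * p) = Const c * mpderiv (single i (Suc 0)) p"
  by (simp add: mpderiv_mult mpderiv_Const)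

lemma mpderiv_power:
  "mpderiv (single i (Suc 0)) (p ^ Suc m) = of_nat (Suc m) * p ^ m * mpderiv (single i (Suc 0)) p"
  by (induction m) (auto simp: mpderiv_mult algebra_simps)

section \<open>Order of vanishing at a point\<close>

fun vanishes_to :: "(nat \<Rightarrow> 'a::comm_ring_1) \<Rightarrow> nat \<Rightarrow> 'a mpoly \<Rightarrow> bool" where
  "vanishes_to \<xi> 0 q \<longleftrightarrow> True"
| "vanishes_to \<xi> (Suc m) q \<longleftrightarrow> eval q \<xi> = 0 \<and> (\<forall>i. vanishes_to \<xi> m (mpderiv (single i (Suc 0)) q))"

lemma vanishes_to_Suc_imp: "vanishes_to \<xi> (Suc m) q \<Longrightarrow> vanishes_to \<xi> m q"
  by (induction m arbitrary: q) auto

lemma vanishes_to_add: "vanishes_to \<xi> m p \<Longrightarrow> vanishes_to \<xi> m q \<Longrightarrow> vanishes_to \<xi> m (p + q)"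
  by (induction m arbitrary: p q) (auto simp: eval_add mpderiv_add)

lemma vanishes_to_mult_left: "vanishes_to \<xi> m r \<Longrightarrow> vanishes_to \<xi> m (q * r)"
proof (induction m arbitrary: q r)
  case (Suc m)
  then have "vanishes_to \<xi> m r"
    using vanishes_to_Suc_imp by blast
  with Suc have "vanishes_to \<xi> m (mpderiv (single i (Suc 0)) q * r + q * mpderiv (single i (Suc 0)) r)" for i
    by (intro vanishes_to_add Suc.IH) simp_all
  with Suc.prems show ?case
    by (simp add: eval_mult mpderiv_mult)
qed simp

lemma vanishes_to_mult:
  "vanishes_to \<xi> a q \<Longrightarrow> vanishes_to \<xi> b r \<Longrightarrow> vanishes_to \<xi> (a + b) (q * r)"
proof (induction "a + b" arbitrary: a b q r)
  case (Suc N)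
  show ?case
  proof (cases "a = 0 \<or> b = 0")
    case True
    with Suc.prems show ?thesis
      using vanishes_to_mult_left[of \<xi> a q r] vanishes_to_mult_left[of \<xi> b r q]
      by (auto simp: mult.commute)
  next
    case False
    then obtain a' b' where ab: "a = Suc a'" "b = Suc b'"
      by (meson not0_implies_Suc)
    have "vanishes_to \<xi> N (mpderiv (single i (Suc 0)) q * r + q * mpderiv (single i (Suc 0)) r)" for i
    proof (rule vanishes_to_add)
      show "vanishes_to \<xi> N (mpderiv (single i (Suc 0)) q * r)"
        using Suc.hyps(1)[of a' b] Suc ab by simp
      show "vanishes_to \<xi> N (q * mpderiv (single i (Suc 0)) r)"
        using Suc.hyps(1)[of a b'] Suc ab by simp
    qed
    with Suc.prems Suc.hyps(2) ab show ?thesis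
      by (simp add: eval_mult mpderiv_mult)
  qed
qed simp

lemma vanishes_to_power: "vanishes_to \<xi> 1 p \<Longrightarrow> vanishes_to \<xi> m (p ^ m)"
proof (induction m)
  case (Suc m)
  then show ?case
    using vanishes_to_mult[of \<xi> 1 p m "p ^ m"] by simp
qed simp

lemma vanishes_to_imp_eval_mpderiv:
  "vanishes_to \<xi> m q \<Longrightarrow> mdeg \<gamma> < m \<Longrightarrow> eval (mpderiv \<gamma> q) \<xi> = 0"
proof (induction \<gamma> arbitrary: m q rule: multi_index_induct)
  case zero
  then show ?case
    by (cases m) auto
next
  case (add_unit i \<beta>)
  then obtain m' where "m = Suc m'" "mdeg \<beta> < m'"
    by (cases m) (auto simp: mdeg_add)
  with add_unit.prems have "vanishes_to \<xi> m' (mpderiv (single i (Suc 0)) q)"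
    by simp
  with add_unit.IH \<open>mdeg \<beta> < m'\<close> have "eval (mpderiv \<beta> (mpderiv (single i (Suc 0)) q)) \<xi> = 0"
    by blast
  then show ?case
    by (simp add: mpderiv_mpderiv add.commute)
qed

section \<open>The functional \<open>f(\<bold>z) e\<^sub>\<xi>(\<bold>z)\<close>\<close>

abbreviation exp_functional :: "nat \<Rightarrow> (nat \<Rightarrow> 'a::field_char_0) \<Rightarrow> 'a mpoly \<Rightarrow> (nat \<Rightarrow>\<^sub>0 nat) \<Rightarrow> 'a" where
  "exp_functional n \<xi> f \<equiv> functional_of_ser (ser_mult (ser_of_poly f) (exp_ser n \<xi>))"

text \<open>On a monomial \<open>x\<^sup>\<alpha>\<close> the functional gives \<open>\<alpha>! \<Sum>\<^sub>\<beta>\<^sub>\<le>\<^sub>\<alpha> f\<^sub>\<beta> \<xi>\<^sup>\<alpha>\<^sup>-\<^sup>\<beta>/(\<alpha>-\<beta>)!\<close>,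
  which is \<open>(f(\<partial>) x\<^sup>\<alpha>)(\<xi>)\<close>.\<close>

lemma dual_app_exp_functional:
  assumes "in_R n q"
  shows "dual_app (exp_functional n \<xi> f) q = (\<Sum>\<gamma>\<in>keys f. lookup f \<gamma> * eval (mpderiv \<gamma> q) \<xi>)"
proof (rule additive_poly_mapping_eq_on[where P = "\<lambda>\<alpha>. keys \<alpha> \<subseteq> {1..n}"
      and F = "dual_app (exp_functional n \<xi> f)"
      and G = "\<lambda>q. \<Sum>\<gamma>\<in>keys f. lookup f \<gamma> * eval (mpderiv \<gamma> q) \<xi>"])
  show "\<forall>\<alpha>\<in>keys q. keys \<alpha> \<subseteq> {1..n}"
    using assms by (simp add: in_R_def)
  fix \<alpha> :: "nat \<Rightarrow>\<^sub>0 nat" and c :: 'a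
  assume \<alpha>: "keys \<alpha> \<subseteq> {1..n}"
  let ?t = "\<lambda>\<beta>. lookup f \<beta> * of_nat (mfalling_fact \<alpha> \<beta>) * mpow \<xi> (\<alpha> - \<beta>)"
  have "of_nat (mfact \<alpha>) * (lookup f \<beta> * exp_ser n \<xi> (\<alpha> - \<beta>)) = ?t \<beta>" if "mle \<beta> \<alpha>" for \<beta>
  proof -
    have "keys (\<alpha> - \<beta>) \<subseteq> {1..n}"
      using \<alpha> keys_diff_nat[of \<alpha> \<beta>] by blast
    moreover have "(of_nat (mfact \<alpha>) :: 'a) = of_nat (mfalling_fact \<alpha> \<beta>) * of_nat (mfact (\<alpha> - \<beta>))"
      by (metis mfalling_fact_mult_mfact[OF that] of_nat_mult)
    moreover have "(of_nat (mfact (\<alpha> - \<beta>)) :: 'a) \<noteq> 0"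
      by (simp add: mfact_def)
    ultimately show ?thesis
      by (simp add: exp_ser_def field_simps)
  qed
  then have "of_nat (mfact \<alpha>) * (\<Sum>\<beta>\<in>{\<beta>. mle \<beta> \<alpha>}. lookup f \<beta> * exp_ser n \<xi> (\<alpha> - \<beta>))
      = (\<Sum>\<beta>\<in>{\<beta>. mle \<beta> \<alpha>}. ?t \<beta>)"
    unfolding sum_distrib_left by (intro sum.cong refl) simp
  also have "\<dots> = (\<Sum>\<beta>\<in>{\<beta>. mle \<beta> \<alpha>} \<union> keys f. ?t \<beta>)"
    by (rule sum.mono_neutral_left) (auto simp: finite_mle mfalling_fact_eq_0_if_not_mle)
  also have "\<dots> = (\<Sum>\<beta>\<in>keys f. ?t \<beta>)"
    by (rule sum.mono_neutral_right) (auto simp: finite_mle in_keys_iff)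
  finally show "dual_app (exp_functional n \<xi> f) (single \<alpha> c)
      = (\<Sum>\<gamma>\<in>keys f. lookup f \<gamma> * eval (mpderiv \<gamma> (single \<alpha> c)) \<xi>)"
    by (simp add: dual_app_single functional_of_ser_def ser_mult_def ser_of_poly_def
        mpderiv_single eval_single sum_distrib_left mult_ac)
qed (simp_all add: dual_app_add mpderiv_add eval_add distrib_left sum.distrib)

lemma dual_app_mult_eq_0_if_star_eq_0:
  assumes "star n q \<phi> = (\<lambda>_. 0)" "in_R n s"
  shows "dual_app \<phi> (q * s) = 0"
proof (rule additive_poly_mapping_eq_on[where F = "\<lambda>s. dual_app \<phi> (q * s)" and G = "\<lambda>_. 0"
      and P = "\<lambda>\<beta>. keys \<beta> \<subseteq> {1..n}"])
  show "\<forall>\<beta>\<in>keys s. keys \<beta> \<subseteq> {1..n}"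
    using assms(2) by (simp add: in_R_def)
  fix \<beta> :: "nat \<Rightarrow>\<^sub>0 nat" and c :: 'a
  assume "keys \<beta> \<subseteq> {1..n}"
  then have "dual_app \<phi> (q * single \<beta> 1) = 0"
    using assms(1) by (metis star_def)
  moreover have "q * single \<beta> c = Const c * (q * single \<beta> 1)"
    by (simp add: Const_mult_single mult.left_commute)
  ultimately show "dual_app \<phi> (q * single \<beta> c) = 0"
    by (simp add: dual_app_Const_mult)
qed (simp_all add: distrib_left dual_app_add)

lemma nil_prop_Suc_if_mdeg_le:
  assumes "\<forall>\<gamma>\<in>keys f. mdeg \<gamma> \<le> k"
  shows "nil_prop n {p. in_R n p \<and> star n p (exp_functional n \<xi> f) = (\<lambda>_. 0)} \<xi> (Suc k)"
  unfolding nil_prop_def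
proof (intro allI impI CollectI conjI)
  fix p :: "'a mpoly"
  assume "in_R n p"
  define q where "q = (p - Const (eval p \<xi>)) ^ Suc k"
  show "in_R n q"
    unfolding q_def by (intro in_R_power in_R_diff \<open>in_R n p\<close> in_R_Const)
  have "vanishes_to \<xi> (Suc k) q"
    unfolding q_def by (rule vanishes_to_power) (simp add: eval_diff)
  have "star n q (exp_functional n \<xi> f) \<beta> = 0" if "keys \<beta> \<subseteq> {1..n}" for \<beta>
  proof -
    have "in_R n (q * single \<beta> 1)"
      by (intro in_R_mult \<open>in_R n q\<close> in_R_single that)
    moreover have "vanishes_to \<xi> (Suc k) (q * single \<beta> 1)"
      using vanishes_to_mult_left[OF \<open>vanishes_to \<xi> (Suc k) q\<close>] by (metis mult.commute)
    moreover have "eval (mpderiv \<gamma> (q * single \<beta> 1)) \<xi> = 0" if "\<gamma> \<in> keys f" for \<gamma>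
      using vanishes_to_imp_eval_mpderiv[OF \<open>vanishes_to \<xi> (Suc k) (q * single \<beta> 1)\<close>] assms that
      by (simp add: less_Suc_eq_le)
    ultimately show ?thesis
      using that by (simp add: star_def dual_app_exp_functional)
  qed
  then show "star n q (exp_functional n \<xi> f) = (\<lambda>_. 0)"
    by (auto simp: star_def)
qed

lemma not_nil_prop_if_dual_app_power_ne_0:
  assumes "in_R n L" "dual_app \<phi> ((L - Const (eval L \<xi>)) ^ k) \<noteq> 0" "M \<le> k"
  shows "\<not> nil_prop n {p. in_R n p \<and> star n p \<phi> = (\<lambda>_. 0)} \<xi> M"
proof
  let ?P = "L - Const (eval L \<xi>)"
  assume "nil_prop n {p. in_R n p \<and> star n p \<phi> = (\<lambda>_. 0)} \<xi> M"
  then have "star n (?P ^ M) \<phi> = (\<lambda>_. 0)"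
    using assms(1) unfolding nil_prop_def by blast
  moreover have "in_R n (?P ^ (k - M))"
    by (intro in_R_power in_R_diff assms(1) in_R_Const)
  ultimately have "dual_app \<phi> (?P ^ M * ?P ^ (k - M)) = 0"
    by (rule dual_app_mult_eq_0_if_star_eq_0)
  with assms(2,3) show False
    by (simp flip: power_add)
qed

section \<open>Nonzero polynomials have non-roots\<close>

lemma mpow_eq_update:
  "mpow b \<alpha> = b N ^ lookup \<alpha> N * mpow b (Poly_Mapping.update N 0 \<alpha>)"
proof -
  have "mpow b \<alpha> = (\<Prod>i\<in>insert N (keys \<alpha>). b i ^ lookup \<alpha> i)"
    by (rule mpow_superset) auto
  also have "\<dots> = b N ^ lookup \<alpha> N * (\<Prod>i\<in>keys \<alpha> - {N}. b i ^ lookup \<alpha> i)"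
    by (simp add: prod.insert_remove)
  also have "(\<Prod>i\<in>keys \<alpha> - {N}. b i ^ lookup \<alpha> i) = mpow b (Poly_Mapping.update N 0 \<alpha>)"
    by (subst mpow_superset[where S = "keys \<alpha> - {N}"]) (auto simp: keys_update lookup_update)
  finally show ?thesis .
qed

lemma mpow_fun_upd_update_0:
  "mpow (b(N := t)) (Poly_Mapping.update N 0 \<alpha>) = mpow b (Poly_Mapping.update N 0 \<alpha>)"
  unfolding mpow_def by (rule prod.cong) (auto simp: keys_update)

text \<open>Viewed as a univariate polynomial in the variable \<open>N\<close>, the sum has as its coefficients the
  sums over the slices \<open>\<alpha>\<^sub>N = j\<close>, with the variable \<open>N\<close> removed.\<close>

lemma sum_mpow_slice_eq_0:
  fixes c :: "(nat \<Rightarrow>\<^sub>0 nat) \<Rightarrow> 'a::{idom, ring_char_0}"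
  assumes "finite S" "\<And>a. (\<Sum>\<alpha>\<in>S. c \<alpha> * mpow a \<alpha>) = 0"
  shows "(\<Sum>\<alpha>\<in>{\<alpha>\<in>S. lookup \<alpha> N = j}. c \<alpha> * mpow a (Poly_Mapping.update N 0 \<alpha>)) = 0"
proof -
  define Q where "Q = (\<Sum>\<alpha>\<in>S. monom (c \<alpha> * mpow a (Poly_Mapping.update N 0 \<alpha>)) (lookup \<alpha> N))"
  have "poly Q t = (\<Sum>\<alpha>\<in>S. c \<alpha> * mpow (a(N := t)) \<alpha>)" for t
    unfolding Q_def poly_sum poly_monom
    by (intro sum.cong refl, subst mpow_eq_update[of "a(N := t)" _ N])
       (simp add: mpow_fun_upd_update_0 mult_ac)
  then have "Q = 0"
    using assms(2) poly_all_0_iff_0 by metis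
  then have "coeff Q j = 0"
    by simp
  then show ?thesis
    using assms(1) by (simp add: Q_def coeff_sum sum.inter_filter)
qed

lemma keys_update_0_subset_lessThan:
  "keys \<alpha> \<subseteq> {..<Suc N} \<Longrightarrow> keys (Poly_Mapping.update N 0 \<alpha>) \<subseteq> {..<N}"
  by (auto simp: keys_update lessThan_Suc)

lemma coeff_eq_0_if_sum_mpow_eq_0:
  fixes c :: "(nat \<Rightarrow>\<^sub>0 nat) \<Rightarrow> 'a::{idom, ring_char_0}"
  assumes "finite S" "\<forall>\<alpha>\<in>S. keys \<alpha> \<subseteq> {..<N}" "\<And>a. (\<Sum>\<alpha>\<in>S. c \<alpha> * mpow a \<alpha>) = 0" "\<alpha>\<^sub>0 \<in> S"
  shows "c \<alpha>\<^sub>0 = 0"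
  using assms
proof (induction N arbitrary: S c \<alpha>\<^sub>0)
  case 0
  then have "S = {0}" "\<alpha>\<^sub>0 = 0"
    by (auto simp: lessThan_0)
  then show ?case
    using "0.prems"(3) by simp
next
  case (Suc N)
  define upd where "upd \<alpha> = Poly_Mapping.update N 0 \<alpha>" for \<alpha> :: "nat \<Rightarrow>\<^sub>0 nat"
  define Sj where "Sj = {\<alpha>\<in>S. lookup \<alpha> N = lookup \<alpha>\<^sub>0 N}"
  define c' where "c' \<beta> = c (Poly_Mapping.update N (lookup \<alpha>\<^sub>0 N) \<beta>)" for \<beta>
  have upd_inverse: "Poly_Mapping.update N (lookup \<alpha>\<^sub>0 N) (upd \<alpha>) = \<alpha>" if "\<alpha> \<in> Sj" for \<alpha>
    using that by (intro poly_mapping_eqI) (auto simp: upd_def Sj_def lookup_update)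
  then have "inj_on upd Sj"
    by (rule inj_on_inverseI)
  have "c' (upd \<alpha>\<^sub>0) = 0"
  proof (rule Suc.IH)
    show "finite (upd ` Sj)"
      using Suc.prems(1) by (simp add: Sj_def)
    show "\<forall>\<beta>\<in>upd ` Sj. keys \<beta> \<subseteq> {..<N}"
      using Suc.prems(2) keys_update_0_subset_lessThan unfolding Sj_def upd_def by blast
    show "(\<Sum>\<alpha>\<in>upd ` Sj. c' \<alpha> * mpow a \<alpha>) = 0" for a
    proof -
      have "(\<Sum>\<alpha>\<in>upd ` Sj. c' \<alpha> * mpow a \<alpha>) = (\<Sum>\<alpha>\<in>Sj. c' (upd \<alpha>) * mpow a (upd \<alpha>))"
        by (rule sum.reindex[OF \<open>inj_on upd Sj\<close>, unfolded comp_def])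
      also have "\<dots> = (\<Sum>\<alpha>\<in>Sj. c \<alpha> * mpow a (upd \<alpha>))"
        by (rule sum.cong[OF refl]) (simp add: c'_def upd_inverse)
      also have "\<dots> = 0"
        unfolding upd_def Sj_def by (rule sum_mpow_slice_eq_0[OF Suc.prems(1,3)])
      finally show ?thesis .
    qed
    show "upd \<alpha>\<^sub>0 \<in> upd ` Sj"
      using Suc.prems(4) by (simp add: Sj_def)
  qed
  then show ?case
    using upd_inverse[of \<alpha>\<^sub>0] Suc.prems(4) by (simp add: c'_def Sj_def)
qed

lemma ex_eval_ne_0:
  fixes p :: "'a::{idom, ring_char_0} mpoly"
  assumes "p \<noteq> 0"
  shows "\<exists>a. eval p a \<noteq> 0"
proof (rule ccontr)
  assume "\<nexists>a. eval p a \<noteq> 0"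
  then have sum_eq_0: "(\<Sum>\<alpha>\<in>keys p. lookup p \<alpha> * mpow a \<alpha>) = 0" for a
    by (simp add: eval_def)
  have "finite (\<Union>\<alpha>\<in>keys p. keys \<alpha>)"
    by simp
  then obtain N where "\<forall>\<alpha>\<in>keys p. keys \<alpha> \<subseteq> {..<N}"
    using finite_nat_bounded[of "\<Union>\<alpha>\<in>keys p. keys \<alpha>"] by auto
  moreover obtain \<alpha>\<^sub>0 where "\<alpha>\<^sub>0 \<in> keys p"
    using assms by fastforce
  ultimately have "lookup p \<alpha>\<^sub>0 = 0"
    using coeff_eq_0_if_sum_mpow_eq_0[OF finite_keys _ sum_eq_0] by blast
  with \<open>\<alpha>\<^sub>0 \<in> keys p\<close> show False
    by (simp add: in_keys_iff)
qed

lemma lookup_omega_dlx: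
  assumes "\<And>j. j \<le> k \<Longrightarrow> homogeneous j (om j)"
  shows "lookup (omega_dlx d k om) \<gamma>
    = (if mdeg \<gamma> \<le> k then fact (d - mdeg \<gamma>) / fact d * lookup (om (mdeg \<gamma>)) \<gamma> else 0)"
proof -
  have "lookup (om j) \<gamma> = 0" if "j \<le> k" "j \<noteq> mdeg \<gamma>" for j
    using assms[OF \<open>j \<le> k\<close>] that(2) by (auto simp: homogeneous_def in_keys_iff)
  then have "lookup (omega_dlx d k om) \<gamma>
      = (\<Sum>j\<in>{..k}. if j = mdeg \<gamma> then fact (d - mdeg \<gamma>) / fact d * lookup (om (mdeg \<gamma>)) \<gamma> else 0)"
    unfolding omega_dlx_def lookup_sum lookup_Const_mult by (intro sum.cong refl) auto
  then show ?thesis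
    by (simp add: sum.delta)
qed

lemma top_coeff_ne_0_if_not_dvd:
  fixes om :: "nat \<Rightarrow> 'a::comm_semiring_1"
  assumes "\<not> l dvd (\<Sum>j\<le>k. om j * l ^ (k - j))"
  shows "om k \<noteq> 0"
proof
  assume "om k = 0"
  then have "(\<Sum>j\<le>k. om j * l ^ (k - j)) = (\<Sum>j<k. om j * l ^ (k - j))"
    by (simp add: lessThan_Suc_atMost[symmetric])
  also have "l dvd \<dots>"
    by (rule dvd_sum) simp
  finally show False
    using assms by simp
qed

lemma mpderiv_linear_form:
  "finite A \<Longrightarrow> mpderiv (single i (Suc 0)) (\<Sum>j\<in>A. Const (a j) * Var j) = Const (if i \<in> A then a i else 0)"
  by (simp add: mpderiv_sum mpderiv_Const_mult mpderiv_Var if_distrib[of "(*) _"] sum.delta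
      cong: if_cong)

lemma mpderiv_power_of_linear:
  assumes "\<And>i. mpderiv (single i (Suc 0)) p = Const (a i)"
  shows "mpderiv \<gamma> (p ^ m) = Const (of_nat (falling_fact m (mdeg \<gamma>)) * mpow a \<gamma>) * p ^ (m - mdeg \<gamma>)"
proof (induction \<gamma> rule: multi_index_induct)
  case zero
  then show ?case
    by simp
next
  case (add_unit i \<beta>)
  let ?C = "of_nat (falling_fact m (mdeg \<beta>)) * mpow a \<beta>"
  have "mpderiv (single i (Suc 0) + \<beta>) (p ^ m) = Const ?C * mpderiv (single i (Suc 0)) (p ^ (m - mdeg \<beta>))"
    using add_unit by (simp flip: mpderiv_mpderiv add: mpderiv_Const_mult)
  also have "\<dots> = Const (of_nat (falling_fact m (Suc (mdeg \<beta>))) * mpow a (single i (Suc 0) + \<beta>))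
                   * p ^ (m - Suc (mdeg \<beta>))"
  proof (cases "m - mdeg \<beta>")
    case 0
    then show ?thesis
      by (simp add: falling_fact_Suc mpderiv_Const[of i 1, simplified])
  next
    case (Suc r)
    then have "mpderiv (single i (Suc 0)) (p ^ (m - mdeg \<beta>)) = of_nat (Suc r) * p ^ r * Const (a i)"
      using mpderiv_power[of i p r] assms by simp
    moreover have "falling_fact m (Suc (mdeg \<beta>)) = falling_fact m (mdeg \<beta>) * Suc r"
      using Suc by (simp add: falling_fact_Suc)
    moreover have "m - Suc (mdeg \<beta>) = r"
      using Suc by simp
    ultimately have "Const ?C * mpderiv (single i (Suc 0)) (p ^ (m - mdeg \<beta>))
        = (Const ?C * Const (of_nat (Suc r)) * Const (a i)) * p ^ (m - Suc (mdeg \<beta>))"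
      by (simp add: of_nat_eq_Const mult_ac)
    also have "\<dots> = Const (of_nat (falling_fact m (Suc (mdeg \<beta>))) * mpow a (single i (Suc 0) + \<beta>))
                   * p ^ (m - Suc (mdeg \<beta>))"
      using \<open>falling_fact m (Suc (mdeg \<beta>)) = _\<close> by (simp add: Const_mult_Const mpow_add mult_ac distrib_right)
    finally show ?thesis .
  qed
  finally show ?case
    by (simp add: mdeg_add)
qed

lemma eval_mpderiv_power_of_linear:
  assumes "\<And>i. mpderiv (single i (Suc 0)) p = Const (a i)" "eval p \<xi> = 0"
  shows "eval (mpderiv \<gamma> (p ^ k)) \<xi> = (if mdeg \<gamma> = k then fact k * mpow a \<gamma> else 0)"
proof -
  have "eval (mpderiv \<gamma> (p ^ k)) \<xi> = of_nat (falling_fact k (mdeg \<gamma>)) * mpow a \<gamma> * 0 ^ (k - mdeg \<gamma>)"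
    using assms by (simp add: mpderiv_power_of_linear eval_mult eval_power)
  then show ?thesis
    by (cases "mdeg \<gamma> < k") (auto simp: falling_fact_self falling_fact_eq_0 of_nat_fact power_0_left)
qed

lemma dual_app_omega_dlx_power_of_linear:
  assumes "\<And>j. j \<le> k \<Longrightarrow> homogeneous j (om j)" "in_R n p"
    and "\<And>i. mpderiv (single i (Suc 0)) p = Const (a i)" "eval p \<xi> = 0"
  shows "dual_app (exp_functional n \<xi> (omega_dlx d k om)) (p ^ k) = fact (d - k) / fact d * fact k * eval (om k) a"
proof -
  let ?f = "omega_dlx d k om"
  let ?t = "\<lambda>\<gamma>. fact (d - k) / fact d * fact k * (lookup (om k) \<gamma> * mpow a \<gamma>)"
  have term_eq: "lookup ?f \<gamma> * eval (mpderiv \<gamma> (p ^ k)) \<xi> = ?t \<gamma>" for \<gamma>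
    using assms(1)[of k] by (auto simp: lookup_omega_dlx[OF assms(1)] eval_mpderiv_power_of_linear[OF assms(3,4)]
        homogeneous_def in_keys_iff)
  then have "dual_app (exp_functional n \<xi> ?f) (p ^ k) = (\<Sum>\<gamma>\<in>keys ?f. ?t \<gamma>)"
    by (simp add: dual_app_exp_functional in_R_power assms(2))
  also have "\<dots> = (\<Sum>\<gamma>\<in>keys ?f \<union> keys (om k). ?t \<gamma>)"
  proof (rule sum.mono_neutral_left)
    show "\<forall>\<gamma>\<in>keys ?f \<union> keys (om k) - keys ?f. ?t \<gamma> = 0"
      by (metis DiffD2 in_keys_iff mult_zero_left term_eq)
  qed auto
  also have "\<dots> = (\<Sum>\<gamma>\<in>keys (om k). ?t \<gamma>)"
    by (intro sum.mono_neutral_right) (auto simp: in_keys_iff)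
  finally show ?thesis
    by (simp add: eval_def sum_distrib_left)
qed

theorem proposition4p16:
  fixes n d k :: nat
    and \<xi> :: "nat \<Rightarrow> 'a::field_char_0"
    and \<omega> l :: "'a mpoly"
    and om :: "nat \<Rightarrow> 'a mpoly"
  assumes "k \<le> d"
    and "in_S n \<omega>" and "homogeneous k \<omega>"
    and "l = Var 0 + (\<Sum>i=1..n. Const (\<xi> i) * Var i)"
    and "\<not> l dvd \<omega>"
    and "\<And>j. j \<le> k \<Longrightarrow> in_R n (om j) \<and> homogeneous j (om j)"
    and "\<omega> = (\<Sum>j\<le>k. om j * l ^ (k - j))"
  shows "is_nil_index n (I_xi n d k om \<xi>) \<xi> (k + 1)"
proof -
  have homogeneous: "\<And>j. j \<le> k \<Longrightarrow> homogeneous j (om j)" and "in_R n (om k)"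
    using assms(6) by auto
  have "om k \<noteq> 0"
    using top_coeff_ne_0_if_not_dvd assms(5,7) by blast
  then obtain a where "eval (om k) a \<noteq> 0"
    using ex_eval_ne_0 by blast
  \<comment> \<open>Cutting \<open>a\<close> down to the variables of \<open>R\<close> makes \<open>\<partial>\<^sub>i L = a'\<^sub>i\<close> hold for every \<open>i\<close>.\<close>
  define a' where "a' i = (if i \<in> {1..n} then a i else 0)" for i
  define L where "L = (\<Sum>i=1..n. Const (a' i) * Var i)"
  have "in_R n L"
    unfolding L_def by (intro in_R_sum in_R_mult in_R_Const in_R_Var) auto
  have "mpderiv (single i (Suc 0)) (L - Const (eval L \<xi>)) = Const (a' i)" for i
    by (simp add: L_def mpderiv_diff mpderiv_linear_form mpderiv_Const a'_def)
  moreover have "eval (om k) a' = eval (om k) a"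
    using \<open>in_R n (om k)\<close> by (rule eval_cong_in_R) (simp add: a'_def)
  ultimately have "dual_app (exp_functional n \<xi> (omega_dlx d k om)) ((L - Const (eval L \<xi>)) ^ k) \<noteq> 0"
    using \<open>eval (om k) a \<noteq> 0\<close> \<open>in_R n L\<close>
    by (simp add: dual_app_omega_dlx_power_of_linear[OF homogeneous] in_R_diff in_R_Const eval_diff)
  moreover have "\<forall>\<gamma>\<in>keys (omega_dlx d k om). mdeg \<gamma> \<le> k"
    by (auto simp: lookup_omega_dlx[OF homogeneous] in_keys_iff split: if_splits)
  ultimately show ?thesis
    unfolding is_nil_index_def I_xi_def
    using nil_prop_Suc_if_mdeg_le not_nil_prop_if_dual_app_power_ne_0[OF \<open>in_R n L\<close>] by simp
qed

end
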